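(* Fix $d\ge 2$ and for $d\times d$ density matrices $\rho,\sigma$ let $$\mathcal{F}_C(\rho,\sigma)=\frac{1-r}{2}+\frac{1+r}{2}\left[\operatorname{tr}(\rho\sigma)+\sqrt{1-\operatorname{tr}(\rho^2)}\sqrt{1-\operatorname{tr}(\sigma^2)}\right],\qquad r=\frac{1}{d-1}.$$ Then $\sqrt{1-\mathcal{F}_C(\rho,\sigma)}$ is a metric on the set of $d\times d$ density matrices.
   Context: A density matrix is a positive semidefinite complex matrix of unit trace. A metric is a function that is nonnegative, vanishes exactly on equal arguments, is symmetric, and satisfies the triangle inequality. *)

theory Defs
  imports "HOL-Analysis.Analysis"
begin

text \<open>Complex d x d matrices are modelled as complex^'n^'n, with d = CARD('n).\<close>

definition hermitian_mat :: "complex^'n^'n \<Rightarrow> bool" where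
  "hermitian_mat A \<longleftrightarrow> (\<forall>i j. A $ i $ j = cnj (A $ j $ i))"

definition quad_form :: "complex^'n^'n \<Rightarrow> complex^'n \<Rightarrow> complex" where
  "quad_form A x = (\<Sum>i\<in>UNIV. \<Sum>j\<in>UNIV. cnj (x $ i) * A $ i $ j * x $ j)"

definition psd_mat :: "complex^'n^'n \<Rightarrow> bool" where
  "psd_mat A \<longleftrightarrow> hermitian_mat A \<and>
     (\<forall>x. Im (quad_form A x) = 0 \<and> 0 \<le> Re (quad_form A x))"

definition mat_trace :: "complex^'n^'n \<Rightarrow> complex" where
  "mat_trace A = (\<Sum>i\<in>UNIV. A $ i $ i)"

definition density_matrix :: "complex^'n^'n \<Rightarrow> bool" where
  "density_matrix \<rho> \<longleftrightarrow> psd_mat \<rho> \<and> mat_trace \<rho> = 1"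

text \<open>The quantity F_C; traces of products of density matrices are real, so we take Re.\<close>
definition F_C :: "complex^'n^'n \<Rightarrow> complex^'n^'n \<Rightarrow> real" where
  "F_C \<rho> \<sigma> =
     (let r = 1 / (real CARD('n) - 1) in
      (1 - r) / 2 + (1 + r) / 2 *
        (Re (mat_trace (\<rho> ** \<sigma>))
         + sqrt (1 - Re (mat_trace (\<rho> ** \<rho>))) * sqrt (1 - Re (mat_trace (\<sigma> ** \<sigma>)))))"

definition metric_on :: "'a set \<Rightarrow> ('a \<Rightarrow> 'a \<Rightarrow> real) \<Rightarrow> bool" where
  "metric_on S dist_fn \<longleftrightarrow>
     (\<forall>x\<in>S. \<forall>y\<in>S. 0 \<le> dist_fn x y) \<and>
     (\<forall>x\<in>S. \<forall>y\<in>S. dist_fn x y = 0 \<longleftrightarrow> x = y) \<and>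
     (\<forall>x\<in>S. \<forall>y\<in>S. dist_fn x y = dist_fn y x) \<and>
     (\<forall>x\<in>S. \<forall>y\<in>S. \<forall>z\<in>S. dist_fn x z \<le> dist_fn x y + dist_fn y z)"

end

theory Submission
  imports Defs
begin

text \<open>
  Send a density matrix \<rho> to the point e(\<rho>) = (\<rho>, sqrt (1 - tr(\<rho>\<rho>))) of the Euclidean
  space of matrices times the reals. For Hermitian matrices Re tr(\<rho>\<sigma>) is the Frobenius inner
  product, and tr(\<rho>\<rho>) is at most (tr \<rho>)^2 = 1 because every entry of a positive
  semidefinite matrix satisfies |\<rho>_ij|^2 \<le> \<rho>_ii \<rho>_jj. So e(\<rho>) is a unit vector and the
  bracket in F_C is the inner product of e(\<rho>) and e(\<sigma>); hence 1 - F_C(\<rho>,\<sigma>) equals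
  (1 + r)/4 |e(\<rho>) - e(\<sigma>)|^2, and sqrt (1 - F_C) is a positive multiple of the Euclidean
  distance pulled back along the injective map e.
\<close>

lemma metric_on_scaled_dist_inj:
  fixes f :: "'a \<Rightarrow> 'b::metric_space"
  assumes "inj_on f S" and "0 < c"
    and "\<And>x y. x \<in> S \<Longrightarrow> y \<in> S \<Longrightarrow> d x y = c * dist (f x) (f y)"
  shows "metric_on S d"
  unfolding metric_on_def
proof (intro conjI ballI)
  fix x y z assume "x \<in> S" "y \<in> S" "z \<in> S"
  show "d x z \<le> d x y + d y z"
    using assms(3)[OF \<open>x \<in> S\<close> \<open>z \<in> S\<close>] assms(3)[OF \<open>x \<in> S\<close> \<open>y \<in> S\<close>]
      assms(3)[OF \<open>y \<in> S\<close> \<open>z \<in> S\<close>] dist_triangle[of "f x" "f z" "f y"] \<open>0 < c\<close>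
    by (simp add: distrib_left[symmetric])
next
  fix x y assume "x \<in> S" "y \<in> S"
  then show "0 \<le> d x y" "d x y = 0 \<longleftrightarrow> x = y" "d x y = d y x"
    using assms inj_on_eq_iff[OF assms(1)] by (simp_all add: dist_commute)
qed

lemma quadratic_nonneg_imp_le:
  fixes a b m :: real
  assumes nonneg: "\<And>t. 0 \<le> a - 2 * t * m + t\<^sup>2 * m * b" and "0 \<le> m" and "0 \<le> b"
  shows "m \<le> a * b"
proof -
  have "0 \<le> a" using nonneg[of 0] by simp
  consider "m = 0" | "0 < m" "b = 0" | "0 < b"
    using \<open>0 \<le> m\<close> \<open>0 \<le> b\<close> by linarith
  then show ?thesis
  proof cases
    case 1
    then show ?thesis using \<open>0 \<le> a\<close> \<open>0 \<le> b\<close> by simp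
  next
    case 2
    then show ?thesis using nonneg[of "(a + 1) / (2 * m)"] by (simp add: field_simps)
  next
    case 3
    then show ?thesis using nonneg[of "1 / b"] by (simp add: field_simps power2_eq_square)
  qed
qed

lemma quad_form_eq: "quad_form A x = (\<Sum>i\<in>UNIV. cnj (x $ i) * (A *v x) $ i)"
  unfolding quad_form_def matrix_vector_mult_def by (simp add: sum_distrib_left mult.assoc)

lemma matrix_vector_mult_axis_nth: "(A *v axis j b) $ k = A $ k $ j * b"
  unfolding matrix_vector_mult_def axis_def by (simp add: if_distrib cong: if_cong)

lemma cnj_axis_nth_mult: "cnj (axis i a $ k) * z = (if k = i then cnj a * z else 0)"
  by (simp add: axis_def)

lemma quad_form_axis: "quad_form A (axis i a) = cnj a * A $ i $ i * a"
  unfolding quad_form_eq matrix_vector_mult_axis_nth cnj_axis_nth_mult by simp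

lemma quad_form_axis_pair:
  assumes "i \<noteq> j"
  shows "quad_form A (axis i a + axis j b)
       = cnj a * A $ i $ i * a + cnj a * A $ i $ j * b + cnj b * A $ j $ i * a + cnj b * A $ j $ j * b"
  using assms
  unfolding quad_form_eq matrix_vector_right_distrib vector_add_component
    matrix_vector_mult_axis_nth complex_cnj_add distrib_right cnj_axis_nth_mult
  by (simp add: sum.distrib algebra_simps)

lemma hermitian_mat_diag_real:
  assumes "hermitian_mat A"
  shows "A $ i $ i = complex_of_real (Re (A $ i $ i))"
proof -
  have "A $ i $ i = cnj (A $ i $ i)"
    using assms unfolding hermitian_mat_def by blast
  then show ?thesis by (simp add: complex_eq_iff)
qed

lemma psd_mat_diag_nonneg: "psd_mat A \<Longrightarrow> 0 \<le> Re (A $ i $ i)"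
  unfolding psd_mat_def using quad_form_axis[of A i 1] by (metis mult_1 mult_1_right complex_cnj_one)

lemma psd_mat_entry_bound:
  assumes "psd_mat A"
  shows "(cmod (A $ i $ j))\<^sup>2 \<le> Re (A $ i $ i) * Re (A $ j $ j)"
proof (cases "i = j")
  case True
  have "cmod (A $ i $ i) = \<bar>Re (A $ i $ i)\<bar>"
    using assms by (subst hermitian_mat_diag_real) (simp_all add: psd_mat_def)
  then show ?thesis
    using True by (simp add: power2_eq_square)
next
  case False
  define m where "m = (cmod (A $ i $ j))\<^sup>2"
  have A_ji: "A $ j $ i = cnj (A $ i $ j)"
    using assms unfolding psd_mat_def hermitian_mat_def by blast
  have m: "A $ i $ j * cnj (A $ i $ j) = complex_of_real m"
    unfolding m_def by (rule complex_norm_square[symmetric])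
  have "0 \<le> Re (A $ i $ i) - 2 * t * m + t\<^sup>2 * m * Re (A $ j $ j)" for t
  proof -
    let ?x = "axis i 1 + axis j (- complex_of_real t * cnj (A $ i $ j))"
    have "quad_form A ?x = A $ i $ i - 2 * complex_of_real t * (A $ i $ j * cnj (A $ i $ j))
        + (complex_of_real t)\<^sup>2 * (A $ i $ j * cnj (A $ i $ j)) * A $ j $ j"
      unfolding quad_form_axis_pair[OF False] A_ji by (simp add: algebra_simps power2_eq_square)
    also have "\<dots> = complex_of_real (Re (A $ i $ i) - 2 * t * m + t\<^sup>2 * m * Re (A $ j $ j))"
      unfolding m
      by (subst (1 2) hermitian_mat_diag_real[of A]) (use assms in \<open>simp_all add: psd_mat_def\<close>)
    finally show ?thesis
      using assms unfolding psd_mat_def by (metis Re_complex_of_real)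
  qed
  then have "m \<le> Re (A $ i $ i) * Re (A $ j $ j)"
    by (rule quadratic_nonneg_imp_le) (simp_all add: m_def psd_mat_diag_nonneg[OF assms])
  then show ?thesis unfolding m_def .
qed

lemma Re_mat_trace_mult_hermitian:
  assumes "hermitian_mat B"
  shows "Re (mat_trace (A ** B)) = inner A B"
proof -
  have "Re (A $ i $ k * B $ k $ i) = inner (A $ i $ k) (B $ i $ k)" for i k
  proof -
    have "B $ k $ i = cnj (B $ i $ k)"
      using assms unfolding hermitian_mat_def by blast
    then show ?thesis by (simp add: inner_complex_def)
  qed
  then show ?thesis
    by (simp add: mat_trace_def matrix_matrix_mult_def Re_sum inner_vec_def)
qed

lemma psd_mat_inner_self_le: "psd_mat A \<Longrightarrow> inner A A \<le> (Re (mat_trace A))\<^sup>2"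
proof -
  assume "psd_mat A"
  have "inner A A = (\<Sum>i\<in>UNIV. \<Sum>j\<in>UNIV. (cmod (A $ i $ j))\<^sup>2)"
    by (simp add: inner_vec_def power2_norm_eq_inner)
  also have "\<dots> \<le> (\<Sum>i\<in>UNIV. \<Sum>j\<in>UNIV. Re (A $ i $ i) * Re (A $ j $ j))"
    by (intro sum_mono psd_mat_entry_bound[OF \<open>psd_mat A\<close>])
  also have "\<dots> = (Re (mat_trace A))\<^sup>2"
    by (simp add: sum_product mat_trace_def Re_sum power2_eq_square)
  finally show ?thesis .
qed

lemma density_matrix_inner_self_le_1: "density_matrix A \<Longrightarrow> inner A A \<le> 1"
  using psd_mat_inner_self_le[of A] by (simp add: density_matrix_def)

definition sphere_lift :: "complex^'n^'n \<Rightarrow> (complex^'n^'n) \<times> real" where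
  "sphere_lift A = (A, sqrt (1 - inner A A))"

lemma inj_sphere_lift: "inj sphere_lift"
  by (rule injI) (simp add: sphere_lift_def)

lemma inner_sphere_lift:
  assumes "density_matrix A" "density_matrix B"
  shows "inner (sphere_lift A) (sphere_lift B)
       = Re (mat_trace (A ** B)) + sqrt (1 - Re (mat_trace (A ** A))) * sqrt (1 - Re (mat_trace (B ** B)))"
  using assms
  by (simp add: sphere_lift_def inner_prod_def Re_mat_trace_mult_hermitian density_matrix_def psd_mat_def)

lemma inner_sphere_lift_self: "density_matrix A \<Longrightarrow> inner (sphere_lift A) (sphere_lift A) = 1"
  using density_matrix_inner_self_le_1[of A] by (simp add: sphere_lift_def inner_prod_def)

lemma one_minus_F_C_eq_dist_sphere_lift:
  fixes A B :: "complex^'n^'n"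
  assumes "density_matrix A" "density_matrix B"
  shows "1 - F_C A B = (1 + 1 / (real CARD('n) - 1)) / 4 * (dist (sphere_lift A) (sphere_lift B))\<^sup>2"
proof -
  let ?r = "1 / (real CARD('n) - 1)" and ?p = "inner (sphere_lift A) (sphere_lift B)"
  have dist_sq: "(dist (sphere_lift A) (sphere_lift B))\<^sup>2 = 2 - 2 * ?p"
    using inner_sphere_lift_self[OF assms(1)] inner_sphere_lift_self[OF assms(2)]
    by (simp add: dist_norm power2_norm_eq_inner inner_diff_left inner_diff_right inner_commute)
  have F_C: "F_C A B = (1 - ?r) / 2 + (1 + ?r) / 2 * ?p"
    unfolding F_C_def inner_sphere_lift[OF assms] Let_def ..
  have "1 - ((1 - r) / 2 + (1 + r) / 2 * p) = (1 + r) / 4 * (2 - 2 * p)" for r p :: real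
    by (simp add: field_simps)
  then show ?thesis unfolding F_C dist_sq .
qed

theorem theorem10:
  assumes "CARD('n) \<ge> 2"
  shows "metric_on {\<rho> :: complex^'n^'n. density_matrix \<rho>} (\<lambda>\<rho> \<sigma>. sqrt (1 - F_C \<rho> \<sigma>))"
proof (rule metric_on_scaled_dist_inj[OF inj_on_subset[OF inj_sphere_lift subset_UNIV]])
  let ?c = "sqrt ((1 + 1 / (real CARD('n) - 1)) / 4)"
  show "0 < ?c"
    using assms by (simp add: field_simps)
  fix A B :: "complex^'n^'n"
  assume "A \<in> {\<rho>. density_matrix \<rho>}" "B \<in> {\<rho>. density_matrix \<rho>}"
  then show "sqrt (1 - F_C A B) = ?c * dist (sphere_lift A) (sphere_lift B)"
    by (simp only: mem_Collect_eq one_minus_F_C_eq_dist_sphere_lift real_sqrt_mult real_sqrt_abs)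
      simp
qed

end
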